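(* Assume $p_0,p_1>0$. For $t\in\mathbb{R}$ let $D_{n,-}(t)=\frac1{n_1}\sum_{j=1}^{n_1}I\big(\eta_1(X_{1,j})>\tfrac12+\tfrac{t}{2p_1}\big)-\frac1{n_0}\sum_{j=1}^{n_0}I\big(\eta_0(X_{0,j})\ge\tfrac12-\tfrac{t}{2p_0}\big)$ and $D_{n,+}(t)=\frac1{n_1}\sum_{j=1}^{n_1}I\big(\eta_1(X_{1,j})\ge\tfrac12+\tfrac{t}{2p_1}\big)-\frac1{n_0}\sum_{j=1}^{n_0}I\big(\eta_0(X_{0,j})>\tfrac12-\tfrac{t}{2p_0}\big)$. Then for every $t\in\mathbb{R}$ and $0<\epsilon\le\sqrt{(p_1\wedge p_0)/2}$, $$\max\Big\{P^{\otimes n}\big(|D_{n,+}(t)-D_+(t)|>\epsilon\big),\,P^{\otimes n}\big(|D_{n,-}(t)-D_-(t)|>\epsilon\big)\Big\}\le 8\exp\Big(-\frac{n(p_1\wedge p_0)\epsilon^2}{4}\Big).$$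
   Context: $(X,A,Y)$ is a random vector on $\mathbb{R}^d\times\{0,1\}\times\{0,1\}$ with law $P$; $p_a=P(A=a)$; $P_{X|A=a}$ the conditional law of $X$ given $A=a$; $\eta_a(x)=P(Y=1\mid A=a,X=x)$. $D_-(t)=P_{X|A=1}\big(\eta_1(X)>\tfrac12+\tfrac{t}{2p_1}\big)-P_{X|A=0}\big(\eta_0(X)\ge\tfrac12-\tfrac{t}{2p_0}\big)$ and $D_+(t)=P_{X|A=1}\big(\eta_1(X)\ge\tfrac12+\tfrac{t}{2p_1}\big)-P_{X|A=0}\big(\eta_0(X)>\tfrac12-\tfrac{t}{2p_0}\big)$. $\{(X_i,A_i,Y_i)\}_{i=1}^n$ is an i.i.d. sample from $P$, $n_a=\#\{i:A_i=a\}$, and $X_{a,1},\dots,X_{a,n_a}$ are the features of the observations with $A_i=a$; an empty average is interpreted as $0$. *)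

theory Defs
  imports "HOL-Probability.Probability"
begin

text \<open>An observation is a triple (X, A, Y) with X in R^d, A and Y in {0,1},
  where the value 1 is encoded as True and 0 as False.\<close>

type_synonym 'd obs = "(real ^ 'd) \<times> bool \<times> bool"

definition obs_space :: "('d::finite) obs measure" where
  "obs_space = borel \<Otimes>\<^sub>M (count_space UNIV \<Otimes>\<^sub>M count_space UNIV)"

definition pA :: "('d::finite) obs measure \<Rightarrow> bool \<Rightarrow> real" where
  "pA P a = measure P {z \<in> space P. fst (snd z) = a}"

definition condX :: "('d::finite) obs measure \<Rightarrow> bool \<Rightarrow> (real ^ 'd) set \<Rightarrow> real" where
  "condX P a S = measure P {z \<in> space P. fst (snd z) = a \<and> fst z \<in> S} / pA P a"

text \<open>eta a is a version of x \<mapsto> P(Y = 1 | A = a, X = x): measurable, and for all Borel B,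
  P(X \<in> B, A = a, Y = 1) = E[ eta a (X) ; X \<in> B, A = a ].\<close>
definition is_regression :: "('d::finite) obs measure \<Rightarrow> (bool \<Rightarrow> real ^ 'd \<Rightarrow> real) \<Rightarrow> bool" where
  "is_regression P \<eta> \<longleftrightarrow>
     (\<forall>a. \<eta> a \<in> borel_measurable borel \<and>
        (\<forall>B \<in> sets borel.
           set_integrable P {z \<in> space P. fst z \<in> B \<and> fst (snd z) = a} (\<lambda>z. \<eta> a (fst z)) \<and>
           measure P {z \<in> space P. fst z \<in> B \<and> fst (snd z) = a \<and> snd (snd z)}
             = (LINT z : {z \<in> space P. fst z \<in> B \<and> fst (snd z) = a} | P. \<eta> a (fst z))))"

definition D_minus :: "('d::finite) obs measure \<Rightarrow> (bool \<Rightarrow> real ^ 'd \<Rightarrow> real) \<Rightarrow> real \<Rightarrow> real" where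
  "D_minus P \<eta> t =
     condX P True {x. \<eta> True x > 1/2 + t / (2 * pA P True)}
   - condX P False {x. \<eta> False x \<ge> 1/2 - t / (2 * pA P False)}"

definition D_plus :: "('d::finite) obs measure \<Rightarrow> (bool \<Rightarrow> real ^ 'd \<Rightarrow> real) \<Rightarrow> real \<Rightarrow> real" where
  "D_plus P \<eta> t =
     condX P True {x. \<eta> True x \<ge> 1/2 + t / (2 * pA P True)}
   - condX P False {x. \<eta> False x > 1/2 - t / (2 * pA P False)}"

text \<open>Empirical frequency, among sample points i < n with A_i = a, of X_i \<in> S.
  An empty average is 0 (automatic, since x / 0 = 0).\<close>
definition emp_freq :: "nat \<Rightarrow> bool \<Rightarrow> (real ^ 'd) set \<Rightarrow> (nat \<Rightarrow> 'd obs) \<Rightarrow> real" where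
  "emp_freq n a S \<omega> =
     (\<Sum>i \<in> {i. i < n \<and> fst (snd (\<omega> i)) = a}. indicator S (fst (\<omega> i)))
     / real (card {i. i < n \<and> fst (snd (\<omega> i)) = a})"

definition Dn_minus :: "('d::finite) obs measure \<Rightarrow> (bool \<Rightarrow> real ^ 'd \<Rightarrow> real) \<Rightarrow> nat \<Rightarrow> real \<Rightarrow> (nat \<Rightarrow> 'd obs) \<Rightarrow> real" where
  "Dn_minus P \<eta> n t \<omega> =
     emp_freq n True {x. \<eta> True x > 1/2 + t / (2 * pA P True)} \<omega>
   - emp_freq n False {x. \<eta> False x \<ge> 1/2 - t / (2 * pA P False)} \<omega>"

definition Dn_plus :: "('d::finite) obs measure \<Rightarrow> (bool \<Rightarrow> real ^ 'd \<Rightarrow> real) \<Rightarrow> nat \<Rightarrow> real \<Rightarrow> (nat \<Rightarrow> 'd obs) \<Rightarrow> real" where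
  "Dn_plus P \<eta> n t \<omega> =
     emp_freq n True {x. \<eta> True x \<ge> 1/2 + t / (2 * pA P True)} \<omega>
   - emp_freq n False {x. \<eta> False x > 1/2 - t / (2 * pA P False)} \<omega>"

end

theory Submission
  imports Defs
begin

(* The empirical frequency within group a is a ratio W/N whose denominator N is random. Instead of
   conditioning on N, apply a Chernoff bound to the i.i.d. sum of the scores
   \<sigma> (1[X \<in> S] - q) - \<delta> over the members of the group, q being the conditional probability: the
   event |W/N - q| > \<delta> forces this sum to be nonnegative for \<sigma> = 1 or \<sigma> = -1. With exponent
   4\<delta>, Hoeffding's lemma for the Bernoulli(q) indicator bounds the moment generating function of one
   score by 1 - p + p e^(-2\<delta>\<^sup>2) \<le> e^(-p\<delta>\<^sup>2), where p = P(A = a), so each one-sided tail is at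
   most e^(-np\<delta>\<^sup>2). Splitting \<epsilon> = \<delta> + \<delta> over the two groups and the two signs gives four
   such terms. *)

lemma Bernoulli_mgf_le:
  fixes q h :: real
  assumes "0 \<le> q" "0 \<le> h"
  shows "q * exp (h * (1 - q)) + (1 - q) * exp (- h * q) \<le> exp (h\<^sup>2 / 8)"
proof -
  have pos: "0 < 1 + q * (exp h - 1)"
    using assms by (simp add: add_pos_nonneg)
  have "ln (1 + q * (exp h - 1)) \<le> h\<^sup>2 / 8 + h * q"
    using Hoeffdings_lemma_aux[OF assms(2,1)] by simp
  then have "1 + q * (exp h - 1) \<le> exp (h\<^sup>2 / 8 + h * q)"
    using pos by (metis exp_le_cancel_iff exp_ln)
  then have "exp (- h * q) * (1 + q * (exp h - 1)) \<le> exp (- h * q) * exp (h\<^sup>2 / 8 + h * q)"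
    by simp
  also have "exp (- h * q) * (1 + q * (exp h - 1)) = q * exp (h * (1 - q)) + (1 - q) * exp (- h * q)"
    by (simp add: algebra_simps exp_add[symmetric] exp_diff)
  finally show ?thesis
    by (simp add: exp_add[symmetric])
qed

lemma convex_mixture_exp_le:
  fixes p x :: real
  assumes "0 \<le> p" "p \<le> 1" "0 \<le> x" "2 * x \<le> 1"
  shows "1 - p + p * exp (- 2 * x) \<le> exp (- (p * x))"
proof -
  have "1 + 2 * x \<le> exp (2 * x)"
    by (rule exp_ge_add_one_self)
  then have "exp (- 2 * x) \<le> 1 / (1 + 2 * x)"
    using assms by (simp add: exp_minus field_simps)
  also have "\<dots> \<le> 1 - x"
  proof -
    have "x * (2 * x) \<le> x * 1"
      using assms by (intro mult_left_mono) auto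
    then show ?thesis
      using assms by (simp add: field_simps)
  qed
  finally have "p * exp (- 2 * x) \<le> p * (1 - x)"
    using assms by (intro mult_left_mono) auto
  then have "1 - p + p * exp (- 2 * x) \<le> 1 + (- (p * x))"
    by (simp add: algebra_simps)
  also have "\<dots> \<le> exp (- (p * x))"
    by (rule exp_ge_add_one_self)
  finally show ?thesis .
qed

lemma shifted_Bernoulli_mgf_le:
  fixes q \<sigma> \<delta> :: real
  assumes "0 \<le> q" "q \<le> 1" "0 \<le> \<delta>" "\<sigma> = 1 \<or> \<sigma> = -1"
  shows "q * exp (4 * \<delta> * (\<sigma> * (1 - q) - \<delta>)) + (1 - q) * exp (4 * \<delta> * (- \<sigma> * q - \<delta>))
    \<le> exp (- 2 * \<delta>\<^sup>2)"
proof -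
  define q' where "q' = (if \<sigma> = 1 then q else 1 - q)"
  have "q * exp (4 * \<delta> * (\<sigma> * (1 - q) - \<delta>)) + (1 - q) * exp (4 * \<delta> * (- \<sigma> * q - \<delta>))
      = exp (- 4 * \<delta> * \<delta>) * (q' * exp (4 * \<delta> * (1 - q')) + (1 - q') * exp (- (4 * \<delta>) * q'))"
  proof (cases "\<sigma> = 1")
    case True
    have e1: "4 * \<delta> * (\<sigma> * (1 - q) - \<delta>) = - 4 * \<delta> * \<delta> + 4 * \<delta> * (1 - q')"
      and e0: "4 * \<delta> * (- \<sigma> * q - \<delta>) = - 4 * \<delta> * \<delta> + - (4 * \<delta>) * q'"
      using True by (simp_all add: q'_def algebra_simps)
    show ?thesis
      unfolding e1 e0 exp_add using True by (simp add: q'_def algebra_simps)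
  next
    case False
    then have "\<sigma> = -1"
      using assms(4) by simp
    then have e1: "4 * \<delta> * (\<sigma> * (1 - q) - \<delta>) = - 4 * \<delta> * \<delta> + - (4 * \<delta>) * q'"
      and e0: "4 * \<delta> * (- \<sigma> * q - \<delta>) = - 4 * \<delta> * \<delta> + 4 * \<delta> * (1 - q')"
      using False by (simp_all add: q'_def algebra_simps)
    show ?thesis
      unfolding e1 e0 exp_add using False by (simp add: q'_def algebra_simps)
  qed
  also have "\<dots> \<le> exp (- 4 * \<delta> * \<delta>) * exp ((4 * \<delta>)\<^sup>2 / 8)"
    using assms by (intro mult_left_mono Bernoulli_mgf_le) (auto simp: q'_def)
  also have "\<dots> = exp (- 2 * \<delta>\<^sup>2)"
    by (simp add: exp_add[symmetric] power2_eq_square)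
  finally show ?thesis .
qed

lemma (in prob_space) Chernoff_bound_iid_sum:
  fixes g :: "'a \<Rightarrow> real"
  assumes "finite I" "0 < l" "integrable M (\<lambda>z. exp (l * g z))"
  shows "measure (PiM I (\<lambda>_. M)) {\<omega> \<in> space (PiM I (\<lambda>_. M)). 0 \<le> (\<Sum>i\<in>I. g (\<omega> i))}
    \<le> (\<integral>z. exp (l * g z) \<partial>M) ^ card I"
proof -
  interpret product: product_sigma_finite "\<lambda>_. M"
    by (simp add: product_sigma_finite_def sigma_finite_measure)
  define u where "u \<omega> = (\<Prod>i\<in>I. exp (l * g (\<omega> i)))" for \<omega>
  have u_eq: "u \<omega> = exp (l * (\<Sum>i\<in>I. g (\<omega> i)))" for \<omega>
    using assms(1) by (simp add: u_def exp_sum sum_distrib_left)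
  have "{\<omega> \<in> space (PiM I (\<lambda>_. M)). 0 \<le> (\<Sum>i\<in>I. g (\<omega> i))}
      = {\<omega> \<in> space (PiM I (\<lambda>_. M)). 1 \<le> u \<omega>}"
    using assms(2) by (simp add: u_eq zero_le_mult_iff)
  also have "measure (PiM I (\<lambda>_. M)) \<dots> \<le> (\<integral>\<omega>. u \<omega> \<partial>PiM I (\<lambda>_. M)) / 1"
    using assms by (intro integral_Markov_inequality_measure[where A = "space (PiM I (\<lambda>_. M))"])
      (auto simp: u_def intro!: product.product_integrable_prod AE_I2 prod_nonneg)
  also have "(\<integral>\<omega>. u \<omega> \<partial>PiM I (\<lambda>_. M)) = (\<Prod>i\<in>I. \<integral>z. exp (l * g z) \<partial>M)"
    unfolding u_def using assms by (intro product.product_integral_prod) auto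
  finally show ?thesis
    by simp
qed

(* An empty group gives frequency 0, since x / 0 = 0. *)
definition cond_emp_freq :: "nat \<Rightarrow> 'a set \<Rightarrow> 'a set \<Rightarrow> (nat \<Rightarrow> 'a) \<Rightarrow> real" where
  "cond_emp_freq n B C \<omega> = (\<Sum>i<n. indicator (B \<inter> C) (\<omega> i)) / (\<Sum>i<n. indicator B (\<omega> i))"

(* Linear in the indicators of B \<inter> C and B, so its sample sum is \<sigma> (W - q N) - \<delta> N. *)
definition deviation_score :: "'a set \<Rightarrow> 'a set \<Rightarrow> real \<Rightarrow> real \<Rightarrow> real \<Rightarrow> 'a \<Rightarrow> real" where
  "deviation_score B C q \<sigma> \<delta> z = \<sigma> * (indicator (B \<inter> C) z - q * indicator B z) - \<delta> * indicator B z"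

lemma measurable_cond_emp_freq [measurable]:
  assumes [measurable]: "B \<in> sets M" "C \<in> sets M"
  shows "cond_emp_freq n B C \<in> borel_measurable (PiM {..<n} (\<lambda>_. M))"
  unfolding cond_emp_freq_def by measurable

lemma measurable_deviation_score [measurable]:
  assumes [measurable]: "B \<in> sets M" "C \<in> sets M"
  shows "deviation_score B C q \<sigma> \<delta> \<in> borel_measurable M"
  unfolding deviation_score_def by measurable

lemma cond_emp_freq_deviation_imp_score_nonneg:
  assumes "\<delta> < \<bar>cond_emp_freq n B C \<omega> - q\<bar>" "0 < \<delta>"
  shows "0 \<le> (\<Sum>i<n. deviation_score B C q 1 \<delta> (\<omega> i))
    \<or> 0 \<le> (\<Sum>i<n. deviation_score B C q (-1) \<delta> (\<omega> i))"
proof -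
  define W where "W = (\<Sum>i<n. indicator (B \<inter> C) (\<omega> i) :: real)"
  define N where "N = (\<Sum>i<n. indicator B (\<omega> i) :: real)"
  have sum_score: "(\<Sum>i<n. deviation_score B C q \<sigma> \<delta> (\<omega> i)) = \<sigma> * (W - q * N) - \<delta> * N" for \<sigma>
    by (simp only: deviation_score_def W_def N_def right_diff_distrib sum_subtractf sum_distrib_left)
  have "0 \<le> W"
    unfolding W_def by (intro sum_nonneg) simp
  have "W \<le> N"
    unfolding W_def N_def by (intro sum_mono) (simp add: indicator_def)
  show ?thesis
  proof (cases "N = 0")
    case True
    with \<open>0 \<le> W\<close> \<open>W \<le> N\<close> show ?thesis
      by (simp add: sum_score)
  next
    case False
    with \<open>0 \<le> W\<close> \<open>W \<le> N\<close> have "0 < N"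
      by simp
    have "\<delta> < \<bar>W / N - q\<bar>"
      using assms(1) by (simp add: cond_emp_freq_def W_def N_def)
    also have "W / N - q = (W - q * N) / N"
      using \<open>0 < N\<close> by (simp add: field_simps)
    also have "\<bar>(W - q * N) / N\<bar> = \<bar>W - q * N\<bar> / N"
      using \<open>0 < N\<close> by simp
    finally have "\<delta> * N < \<bar>W - q * N\<bar>"
      using \<open>0 < N\<close> by (simp add: less_divide_eq)
    then show ?thesis
      by (auto simp: sum_score abs_if split: if_splits)
  qed
qed

lemma (in prob_space) has_bochner_integral_exp_deviation_score:
  assumes "B \<in> events" "C \<in> events"
  shows "has_bochner_integral M (\<lambda>z. exp (l * deviation_score B C q \<sigma> \<delta> z))
    ((1 - prob B) + prob (B \<inter> C) * exp (l * (\<sigma> * (1 - q) - \<delta>))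
       + prob (B - C) * exp (l * (- \<sigma> * q - \<delta>)))"
proof -
  have indicators: "has_bochner_integral M
      (\<lambda>z. indicator (space M - B) z + indicator (B \<inter> C) z * exp (l * (\<sigma> * (1 - q) - \<delta>))
             + indicator (B - C) z * exp (l * (- \<sigma> * q - \<delta>)))
      (prob (space M - B) + prob (B \<inter> C) * exp (l * (\<sigma> * (1 - q) - \<delta>))
         + prob (B - C) * exp (l * (- \<sigma> * q - \<delta>)))"
    using assms by (intro has_bochner_integral_add has_bochner_integral_mult_left
        has_bochner_integral_real_indicator) (auto simp: less_top[symmetric])
  show ?thesis
    by (rule has_bochner_integral_cong[THEN iffD2, OF refl _ _ indicators])
      (auto simp: deviation_score_def indicator_def prob_compl assms algebra_simps)
qed

lemma (in prob_space) integral_exp_deviation_score_le: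
  assumes "B \<in> events" "C \<in> events" "0 < prob B" "\<sigma> = 1 \<or> \<sigma> = -1" "0 < \<delta>" "2 * \<delta>\<^sup>2 \<le> 1"
  defines "q \<equiv> prob (B \<inter> C) / prob B"
  shows "(\<integral>z. exp (4 * \<delta> * deviation_score B C q \<sigma> \<delta> z) \<partial>M) \<le> exp (- (prob B * \<delta>\<^sup>2))"
proof -
  define p where "p = prob B"
  have "prob (B \<inter> C) \<le> p"
    using assms(1) by (auto simp: p_def intro!: finite_measure_mono)
  then have q: "0 \<le> q" "q \<le> 1"
    using assms(3) by (simp_all add: q_def p_def)
  have in_C: "prob (B \<inter> C) = p * q" and not_in_C: "prob (B - C) = p * (1 - q)"
    using assms(1-3) by (simp_all add: q_def p_def finite_measure_Diff' algebra_simps)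
  have "(\<integral>z. exp (4 * \<delta> * deviation_score B C q \<sigma> \<delta> z) \<partial>M)
      = 1 - p + prob (B \<inter> C) * exp (4 * \<delta> * (\<sigma> * (1 - q) - \<delta>))
          + prob (B - C) * exp (4 * \<delta> * (- \<sigma> * q - \<delta>))"
    unfolding p_def
    by (rule has_bochner_integral_integral_eq[OF has_bochner_integral_exp_deviation_score[OF assms(1,2)]])
  also have "\<dots> = 1 - p + p * (q * exp (4 * \<delta> * (\<sigma> * (1 - q) - \<delta>))
          + (1 - q) * exp (4 * \<delta> * (- \<sigma> * q - \<delta>)))"
    unfolding in_C not_in_C by (simp add: algebra_simps)
  also have "\<dots> \<le> 1 - p + p * exp (- 2 * \<delta>\<^sup>2)"
    using assms(3-5) q by (intro add_left_mono mult_left_mono shifted_Bernoulli_mgf_le) (auto simp: p_def)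
  also have "\<dots> \<le> exp (- (p * \<delta>\<^sup>2))"
    using assms(3,6) by (intro convex_mixture_exp_le) (auto simp: p_def)
  finally show ?thesis
    by (simp add: p_def)
qed

lemma (in prob_space) cond_emp_freq_tail_bound:
  assumes "B \<in> events" "C \<in> events" "0 < prob B" "0 < \<delta>" "2 * \<delta>\<^sup>2 \<le> 1"
  shows "measure (PiM {..<n} (\<lambda>_. M))
      {\<omega> \<in> space (PiM {..<n} (\<lambda>_. M)). \<delta> < \<bar>cond_emp_freq n B C \<omega> - prob (B \<inter> C) / prob B\<bar>}
    \<le> 2 * exp (- (real n * prob B * \<delta>\<^sup>2))"
proof -
  define q where "q = prob (B \<inter> C) / prob B"
  define Pn where "Pn = PiM {..<n} (\<lambda>_. M)"
  interpret Pn: prob_space Pn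
    unfolding Pn_def by (intro prob_space_PiM prob_space_axioms)
  define F where "F \<sigma> = {\<omega> \<in> space Pn. 0 \<le> (\<Sum>i<n. deviation_score B C q \<sigma> \<delta> (\<omega> i))}" for \<sigma>
  have F_sets: "F \<sigma> \<in> Pn.events" for \<sigma>
    using assms(1,2) unfolding F_def Pn_def by measurable
  have F_le: "Pn.prob (F \<sigma>) \<le> exp (- (real n * prob B * \<delta>\<^sup>2))" if "\<sigma> = 1 \<or> \<sigma> = -1" for \<sigma>
  proof -
    have "Pn.prob (F \<sigma>) \<le> (\<integral>z. exp (4 * \<delta> * deviation_score B C q \<sigma> \<delta> z) \<partial>M) ^ card {..<n}"
      unfolding F_def Pn_def using assms(4) has_bochner_integral_exp_deviation_score[OF assms(1,2)]
      by (intro Chernoff_bound_iid_sum) (auto simp: has_bochner_integral_iff)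
    also have "\<dots> \<le> exp (- (prob B * \<delta>\<^sup>2)) ^ n"
      using assms that unfolding q_def card_lessThan
      by (intro power_mono integral_exp_deviation_score_le integral_nonneg_AE) auto
    also have "\<dots> = exp (- (real n * prob B * \<delta>\<^sup>2))"
      by (simp add: exp_of_nat_mult[symmetric])
    finally show ?thesis .
  qed
  have "{\<omega> \<in> space Pn. \<delta> < \<bar>cond_emp_freq n B C \<omega> - q\<bar>} \<subseteq> F 1 \<union> F (-1)"
    using cond_emp_freq_deviation_imp_score_nonneg assms(4) unfolding F_def by blast
  then have "Pn.prob {\<omega> \<in> space Pn. \<delta> < \<bar>cond_emp_freq n B C \<omega> - q\<bar>} \<le> Pn.prob (F 1 \<union> F (-1))"
    using F_sets by (intro Pn.finite_measure_mono) auto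
  also have "\<dots> \<le> Pn.prob (F 1) + Pn.prob (F (-1))"
    using F_sets by (intro measure_Un_le) auto
  also have "\<dots> \<le> 2 * exp (- (real n * prob B * \<delta>\<^sup>2))"
    using F_le[of 1] F_le[of "-1"] by simp
  finally show ?thesis
    by (simp add: Pn_def q_def)
qed

lemma (in prob_space) cond_emp_freq_diff_tail_bound:
  assumes "B\<^sub>1 \<in> events" "C\<^sub>1 \<in> events" "B\<^sub>0 \<in> events" "C\<^sub>0 \<in> events"
    and "0 < prob B\<^sub>1" "0 < prob B\<^sub>0" "0 < \<epsilon>" "\<epsilon>\<^sup>2 \<le> 2"
  shows "measure (PiM {..<n} (\<lambda>_. M))
      {\<omega> \<in> space (PiM {..<n} (\<lambda>_. M)).
        \<epsilon> < \<bar>(cond_emp_freq n B\<^sub>1 C\<^sub>1 \<omega> - cond_emp_freq n B\<^sub>0 C\<^sub>0 \<omega>)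
              - (prob (B\<^sub>1 \<inter> C\<^sub>1) / prob B\<^sub>1 - prob (B\<^sub>0 \<inter> C\<^sub>0) / prob B\<^sub>0)\<bar>}
    \<le> 4 * exp (- (real n * min (prob B\<^sub>1) (prob B\<^sub>0) * \<epsilon>\<^sup>2) / 4)"
proof -
  define Pn where "Pn = PiM {..<n} (\<lambda>_. M)"
  interpret Pn: prob_space Pn
    unfolding Pn_def by (intro prob_space_PiM prob_space_axioms)
  define \<delta> where "\<delta> = \<epsilon> / 2"
  have \<delta>: "0 < \<delta>" "2 * \<delta>\<^sup>2 \<le> 1"
    using assms(7,8) by (simp_all add: \<delta>_def power_divide)
  define E where "E B C = {\<omega> \<in> space Pn. \<delta> < \<bar>cond_emp_freq n B C \<omega> - prob (B \<inter> C) / prob B\<bar>}" for B C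
  have E_sets: "E B C \<in> Pn.events" if [measurable]: "B \<in> events" "C \<in> events" for B C
    unfolding E_def Pn_def by measurable
  have E_le: "Pn.prob (E B C) \<le> 2 * exp (- (real n * min (prob B\<^sub>1) (prob B\<^sub>0) * \<epsilon>\<^sup>2) / 4)"
    if "B \<in> events" "C \<in> events" "min (prob B\<^sub>1) (prob B\<^sub>0) \<le> prob B" for B C
  proof -
    have "Pn.prob (E B C) \<le> 2 * exp (- (real n * prob B * \<delta>\<^sup>2))"
      unfolding E_def Pn_def using that assms(5,6) \<delta>
      by (intro cond_emp_freq_tail_bound) auto
    also have "\<dots> \<le> 2 * exp (- (real n * min (prob B\<^sub>1) (prob B\<^sub>0) * \<epsilon>\<^sup>2) / 4)"
      using that(3) by (auto simp: \<delta>_def power_divide intro!: mult_right_mono mult_left_mono)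
    finally show ?thesis .
  qed
  have split_deviation: "\<delta> < \<bar>a - c\<bar> \<or> \<delta> < \<bar>b - d\<bar>" if "\<epsilon> < \<bar>(a - b) - (c - d)\<bar>" for a b c d :: real
    using that unfolding \<delta>_def by linarith
  have "{\<omega> \<in> space Pn.
        \<epsilon> < \<bar>(cond_emp_freq n B\<^sub>1 C\<^sub>1 \<omega> - cond_emp_freq n B\<^sub>0 C\<^sub>0 \<omega>)
              - (prob (B\<^sub>1 \<inter> C\<^sub>1) / prob B\<^sub>1 - prob (B\<^sub>0 \<inter> C\<^sub>0) / prob B\<^sub>0)\<bar>}
      \<subseteq> E B\<^sub>1 C\<^sub>1 \<union> E B\<^sub>0 C\<^sub>0"
    unfolding E_def using split_deviation by blast
  then have "Pn.prob {\<omega> \<in> space Pn.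
        \<epsilon> < \<bar>(cond_emp_freq n B\<^sub>1 C\<^sub>1 \<omega> - cond_emp_freq n B\<^sub>0 C\<^sub>0 \<omega>)
              - (prob (B\<^sub>1 \<inter> C\<^sub>1) / prob B\<^sub>1 - prob (B\<^sub>0 \<inter> C\<^sub>0) / prob B\<^sub>0)\<bar>}
      \<le> Pn.prob (E B\<^sub>1 C\<^sub>1 \<union> E B\<^sub>0 C\<^sub>0)"
    using assms(1-4) E_sets by (intro Pn.finite_measure_mono) auto
  also have "\<dots> \<le> Pn.prob (E B\<^sub>1 C\<^sub>1) + Pn.prob (E B\<^sub>0 C\<^sub>0)"
    using assms(1-4) E_sets by (intro measure_Un_le) auto
  also have "\<dots> \<le> 4 * exp (- (real n * min (prob B\<^sub>1) (prob B\<^sub>0) * \<epsilon>\<^sup>2) / 4)"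
    using E_le[OF assms(1,2)] E_le[OF assms(3,4)] by simp
  finally show ?thesis
    unfolding Pn_def .
qed

lemma space_obs_space: "space obs_space = UNIV"
  by (simp add: obs_space_def space_pair_measure)

lemma group_in_sets_obs_space: "{z. fst (snd z) = a} \<in> sets obs_space"
proof -
  have "{z \<in> space obs_space. fst (snd z) = a} \<in> sets obs_space"
    unfolding obs_space_def by measurable
  then show ?thesis
    by (simp add: space_obs_space)
qed

lemma feature_event_in_sets_obs_space:
  assumes [measurable]: "S \<in> sets borel"
  shows "{z. fst z \<in> S} \<in> sets obs_space"
proof -
  have "{z \<in> space obs_space. fst z \<in> S} \<in> sets obs_space"
    unfolding obs_space_def by measurable
  then show ?thesis
    by (simp add: space_obs_space)
qed

lemma emp_freq_eq_cond_emp_freq: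
  "emp_freq n a S \<omega> = cond_emp_freq n {z. fst (snd z) = a} {z. fst z \<in> S} \<omega>"
  by (simp add: emp_freq_def cond_emp_freq_def sum.inter_filter indicator_def Int_def conj_ac lessThan_def)

lemma emp_freq_diff_tail_bound:
  fixes P :: "('d::finite) obs measure"
  assumes "prob_space P" "sets P = sets obs_space" "S\<^sub>1 \<in> sets borel" "S\<^sub>0 \<in> sets borel"
    and "0 < pA P True" "0 < pA P False" "0 < \<epsilon>" "\<epsilon>\<^sup>2 \<le> 2"
  shows "measure (PiM {..<n} (\<lambda>_. P))
      {\<omega> \<in> space (PiM {..<n} (\<lambda>_. P)).
        \<epsilon> < \<bar>(emp_freq n True S\<^sub>1 \<omega> - emp_freq n False S\<^sub>0 \<omega>) - (condX P True S\<^sub>1 - condX P False S\<^sub>0)\<bar>}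
    \<le> 4 * exp (- (real n * min (pA P True) (pA P False) * \<epsilon>\<^sup>2) / 4)"
proof -
  interpret prob_space P
    by fact
  have space: "space P = UNIV"
    using sets_eq_imp_space_eq[OF assms(2)] by (simp add: space_obs_space)
  have group: "{z. fst (snd z) = a} \<in> events" for a
    using group_in_sets_obs_space assms(2) by simp
  have feature: "{z. fst z \<in> S} \<in> events" if "S \<in> sets borel" for S
    using feature_event_in_sets_obs_space[OF that] assms(2) by simp
  have pA: "pA P a = prob {z. fst (snd z) = a}" for a
    by (simp add: pA_def space)
  have condX: "condX P a S = prob ({z. fst (snd z) = a} \<inter> {z. fst z \<in> S}) / prob {z. fst (snd z) = a}"
    for a S
    by (simp add: condX_def pA space Int_def)
  show ?thesis
    unfolding emp_freq_eq_cond_emp_freq condX pA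
    using assms(5-8) by (intro cond_emp_freq_diff_tail_bound group feature assms(3,4)) (simp_all add: pA)
qed

theorem lemmaC7:
  fixes P :: "('d::finite) obs measure" and \<eta> :: "bool \<Rightarrow> real ^ 'd \<Rightarrow> real"
    and n :: nat and t \<epsilon> :: real
  assumes "prob_space P"
    and "sets P = sets obs_space"
    and "is_regression P \<eta>"
    and "pA P False > 0" and "pA P True > 0"
    and "0 < \<epsilon>" and "\<epsilon> \<le> sqrt (min (pA P True) (pA P False) / 2)"
  shows "max (measure (PiM {..<n} (\<lambda>_. P))
                {\<omega> \<in> space (PiM {..<n} (\<lambda>_. P)). \<bar>Dn_plus P \<eta> n t \<omega> - D_plus P \<eta> t\<bar> > \<epsilon>})
             (measure (PiM {..<n} (\<lambda>_. P))
                {\<omega> \<in> space (PiM {..<n} (\<lambda>_. P)). \<bar>Dn_minus P \<eta> n t \<omega> - D_minus P \<eta> t\<bar> > \<epsilon>})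
         \<le> 8 * exp (- (real n * min (pA P True) (pA P False) * \<epsilon>^2) / 4)"
proof -
  have [measurable]: "\<eta> a \<in> borel_measurable borel" for a
    using assms(3) by (simp add: is_regression_def)
  have level_sets: "{x. c < \<eta> a x} \<in> sets borel" "{x. c \<le> \<eta> a x} \<in> sets borel" for a c
    by measurable
  have "\<epsilon>\<^sup>2 \<le> (sqrt (min (pA P True) (pA P False) / 2))\<^sup>2"
    using assms(6,7) by (intro power_mono) auto
  also have "\<dots> = min (pA P True) (pA P False) / 2"
    using assms(4,5) by simp
  also have "\<dots> \<le> 2"
    using prob_space.prob_le_1[OF assms(1), of "{z \<in> space P. fst (snd z) = True}"]
      min.cobounded1[of "pA P True" "pA P False"]
    unfolding pA_def by linarith
  finally have "\<epsilon>\<^sup>2 \<le> 2" .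
  then show ?thesis
    unfolding Dn_plus_def D_plus_def Dn_minus_def D_minus_def
    using assms(1,2,4-6) level_sets
    by (intro max.boundedI order.trans[OF emp_freq_diff_tail_bound]) auto
qed

end
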